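(* The loose integration $(\mathcal A,U,\varphi)$ of $m$ symmetric qualitative formalisms $(\mathcal A_1,U,\varphi_1),\dots,(\mathcal A_m,U,\varphi_m)$ over the same set $U$ is a sequential formalism.
   Context: A finite non-associative algebra is a tuple $(\mathcal A,\cup,\neg,\emptyset,\mathcal B,\diamond,\overline{\cdot},e)$ where $(\mathcal A,\cup,\neg,\emptyset,\mathcal B)$ is a finite Boolean algebra (with $x\cap y=\neg(\neg x\cup\neg y)$) and for all $x,y,z$: $\overline{\overline x}=x$, $\overline{x\cup y}=\overline x\cup\overline y$, $\overline{x\diamond y}=\overline y\diamond\overline x$, $e\diamond x=x\diamond e=x$, $x\diamond(y\cup z)=(x\diamond y)\cup(x\diamond z)$, $(x\diamond y)\cap\overline z=\emptyset\iff(y\diamond z)\cap\overline x=\emptyset$. $\mathcal B$ is the universal relation; $r\subseteq r'$ means $r\cup r'=r'$; atoms are the basic relations; $\mathsf B$ denotes the set of atoms. A symmetric qualitative formalism is a triple $(\mathcal A,U,\varphi)$ with $\mathcal A$ a finite non-associative algebra, $U\neq\emptyset$ and $\varphi:\mathcal A\to2^{U\times U}$ with $\varphi(\emptyset)=\emptyset$, $\varphi(\overline r)=\varphi(r)^{-1}$, $\varphi(r\cap r')=\varphi(r)\cap\varphi(r')$, $\varphi(r\cup r')=\varphi(r)\cup\varphi(r')$, $\varphi(r\diamond r')\supseteq(\varphi(r)\circ\varphi(r'))\cap\varphi(\mathcal B)$. A projection operator from $\mathcal A$ to $\mathcal A'$ is a map $\Rsh$ with $\Rsh(r\cup r')=\Rsh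 r\cup\Rsh r'$ and $\Rsh\overline r=\overline{\Rsh r}$. A finite multi-algebra is a product $\mathcal A_1\times\cdots\times\mathcal A_m$ of finite non-associative algebras with projection operators $\Rsh_i^j:\mathcal A_i\to\mathcal A_j$ for all distinct $i,j$. Relations $R=(R_1,\dots,R_m)$; basic if all $R_i$ are atoms; universal relation $\mathcal B=(\mathcal B_1,\dots,\mathcal B_m)$; operations and $\subseteq$ componentwise; $B\in R$ means $B$ basic, $B\subseteq R$. The projection closure $\Rsh R$: repeatedly replace $R_j$ by $R_j\cap\Rsh_i^jR_i$ until a fixed point. A sequential formalism is $(\mathcal A,U,\varphi)$ with $\mathcal A$ a finite multi-algebra, $U\ne\emptyset$, $\varphi:\mathcal A\to 2^{U\times U}$ satisfying $\varphi(\Rsh R)=\varphi(R)$, $\varphi(\overline R)=\varphi(R)^{-1}$, $\varphi((\emptyset,\dots,\emptyset))=\emptyset$, $\varphi(R\diamond R')\supseteq(\varphi(R)\circ\varphi(R'))\cap\varphi(\mathcal B)$, $\varphi(R\cap R')=\varphi(R)\cap\varphi(R')$, $\varphi(R)=\bigcup_{B\in R}\varphi(B)$. The loose integration of $(\mathcal A_1,U,\varphi_1),\dots,(\mathcal A_m,U,\varphi_m)$ is $(\mathcal A,U,\varphi)$ where $\mathcal A$ is the multi-algebra $\mathcal A_1\times\cdots\times\mathcal A_m$ with projections defined on atoms $b\in\mathsf B_i$ by $\Rsh_i^jb=\bigcup\{b'\in\mathsf B_j:\varphi_i(b)\cap\varphi_j(b')\neq\emptyset\}$ (extended to all relations by union),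 and $\varphi(R)=\bigcap_i\varphi_i(R_i)$. *)

theory Defs
  imports "HOL-Library.FuncSet"
begin

record 'a na_alg =
  na_carrier :: "'a set"
  na_join :: "'a \<Rightarrow> 'a \<Rightarrow> 'a"
  na_neg  :: "'a \<Rightarrow> 'a"
  na_bot  :: 'a
  na_top  :: 'a
  na_comp :: "'a \<Rightarrow> 'a \<Rightarrow> 'a"      (* weak composition diamond *)
  na_conv :: "'a \<Rightarrow> 'a"
  na_id   :: 'a

definition na_meet :: "'a na_alg \<Rightarrow> 'a \<Rightarrow> 'a \<Rightarrow> 'a" where
  "na_meet A x y = na_neg A (na_join A (na_neg A x) (na_neg A y))"

definition na_leq :: "'a na_alg \<Rightarrow> 'a \<Rightarrow> 'a \<Rightarrow> bool" where
  "na_leq A x y \<longleftrightarrow> na_join A x y = y"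

definition na_atoms :: "'a na_alg \<Rightarrow> 'a set" where
  "na_atoms A = {x \<in> na_carrier A. x \<noteq> na_bot A \<and>
       (\<forall>y \<in> na_carrier A. na_leq A y x \<longrightarrow> y = na_bot A \<or> y = x)}"

definition na_Join :: "'a na_alg \<Rightarrow> 'a set \<Rightarrow> 'a" where
  "na_Join A S = (THE x. x \<in> na_carrier A \<and> (\<forall>s\<in>S. na_leq A s x) \<and>
       (\<forall>y\<in>na_carrier A. (\<forall>s\<in>S. na_leq A s y) \<longrightarrow> na_leq A x y))"

definition boolean_alg :: "'a na_alg \<Rightarrow> bool" where
  "boolean_alg A \<longleftrightarrow>
     na_bot A \<in> na_carrier A \<and> na_top A \<in> na_carrier A \<and>
     (\<forall>x\<in>na_carrier A. \<forall>y\<in>na_carrier A. na_join A x y \<in> na_carrier A) \<and>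
     (\<forall>x\<in>na_carrier A. na_neg A x \<in> na_carrier A) \<and>
     (\<forall>x\<in>na_carrier A. \<forall>y\<in>na_carrier A. \<forall>z\<in>na_carrier A.
        na_join A x y = na_join A y x \<and>
        na_meet A x y = na_meet A y x \<and>
        na_join A (na_join A x y) z = na_join A x (na_join A y z) \<and>
        na_meet A (na_meet A x y) z = na_meet A x (na_meet A y z) \<and>
        na_join A x (na_meet A x y) = x \<and>
        na_meet A x (na_join A x y) = x \<and>
        na_join A x (na_meet A y z) = na_meet A (na_join A x y) (na_join A x z) \<and>
        na_meet A x (na_join A y z) = na_join A (na_meet A x y) (na_meet A x z) \<and>
        na_join A x (na_neg A x) = na_top A \<and>
        na_meet A x (na_neg A x) = na_bot A \<and>
        na_join A x (na_bot A) = x \<and>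
        na_meet A x (na_top A) = x)"

definition finite_na_algebra :: "'a na_alg \<Rightarrow> bool" where
  "finite_na_algebra A \<longleftrightarrow>
     finite (na_carrier A) \<and> boolean_alg A \<and>
     na_id A \<in> na_carrier A \<and>
     (\<forall>x\<in>na_carrier A. na_conv A x \<in> na_carrier A) \<and>
     (\<forall>x\<in>na_carrier A. \<forall>y\<in>na_carrier A. na_comp A x y \<in> na_carrier A) \<and>
     (\<forall>x\<in>na_carrier A. \<forall>y\<in>na_carrier A. \<forall>z\<in>na_carrier A.
        na_conv A (na_conv A x) = x \<and>
        na_conv A (na_join A x y) = na_join A (na_conv A x) (na_conv A y) \<and>
        na_conv A (na_comp A x y) = na_comp A (na_conv A y) (na_conv A x) \<and>
        na_comp A (na_id A) x = x \<and> na_comp A x (na_id A) = x \<and>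
        na_comp A x (na_join A y z) = na_join A (na_comp A x y) (na_comp A x z) \<and>
        (na_meet A (na_comp A x y) (na_conv A z) = na_bot A \<longleftrightarrow>
         na_meet A (na_comp A y z) (na_conv A x) = na_bot A))"

definition sym_qual_formalism :: "'a na_alg \<Rightarrow> 'u set \<Rightarrow> ('a \<Rightarrow> ('u \<times> 'u) set) \<Rightarrow> bool" where
  "sym_qual_formalism A U \<phi> \<longleftrightarrow>
     finite_na_algebra A \<and> U \<noteq> {} \<and>
     (\<forall>r\<in>na_carrier A. \<phi> r \<subseteq> U \<times> U) \<and>
     \<phi> (na_bot A) = {} \<and>
     (\<forall>r\<in>na_carrier A. \<phi> (na_conv A r) = (\<phi> r)\<inverse>) \<and>
     (\<forall>r\<in>na_carrier A. \<forall>r'\<in>na_carrier A.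
        \<phi> (na_meet A r r') = \<phi> r \<inter> \<phi> r' \<and>
        \<phi> (na_join A r r') = \<phi> r \<union> \<phi> r' \<and>
        \<phi> (na_comp A r r') \<supseteq> (\<phi> r O \<phi> r') \<inter> \<phi> (na_top A))"

definition projection_op :: "'a na_alg \<Rightarrow> 'a na_alg \<Rightarrow> ('a \<Rightarrow> 'a) \<Rightarrow> bool" where
  "projection_op A A' P \<longleftrightarrow>
     (\<forall>r\<in>na_carrier A. P r \<in> na_carrier A') \<and>
     (\<forall>r\<in>na_carrier A. \<forall>r'\<in>na_carrier A.
        P (na_join A r r') = na_join A' (P r) (P r')) \<and>
     (\<forall>r\<in>na_carrier A. P (na_conv A r) = na_conv A' (P r))"

definition multi_algebra :: "nat \<Rightarrow> (nat \<Rightarrow> 'a na_alg) \<Rightarrow> (nat \<Rightarrow> nat \<Rightarrow> 'a \<Rightarrow> 'a) \<Rightarrow> bool" where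
  "multi_algebra m As P \<longleftrightarrow>
     (\<forall>i<m. finite_na_algebra (As i)) \<and>
     (\<forall>i<m. \<forall>j<m. i \<noteq> j \<longrightarrow> projection_op (As i) (As j) (P i j))"

definition m_rels :: "nat \<Rightarrow> (nat \<Rightarrow> 'a na_alg) \<Rightarrow> (nat \<Rightarrow> 'a) set" where
  "m_rels m As = PiE {..<m} (\<lambda>i. na_carrier (As i))"

definition m_meet :: "nat \<Rightarrow> (nat \<Rightarrow> 'a na_alg) \<Rightarrow> (nat \<Rightarrow> 'a) \<Rightarrow> (nat \<Rightarrow> 'a) \<Rightarrow> (nat \<Rightarrow> 'a)" where
  "m_meet m As R R' = restrict (\<lambda>i. na_meet (As i) (R i) (R' i)) {..<m}"

definition m_comp :: "nat \<Rightarrow> (nat \<Rightarrow> 'a na_alg) \<Rightarrow> (nat \<Rightarrow> 'a) \<Rightarrow> (nat \<Rightarrow> 'a) \<Rightarrow> (nat \<Rightarrow> 'a)" where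
  "m_comp m As R R' = restrict (\<lambda>i. na_comp (As i) (R i) (R' i)) {..<m}"

definition m_conv :: "nat \<Rightarrow> (nat \<Rightarrow> 'a na_alg) \<Rightarrow> (nat \<Rightarrow> 'a) \<Rightarrow> (nat \<Rightarrow> 'a)" where
  "m_conv m As R = restrict (\<lambda>i. na_conv (As i) (R i)) {..<m}"

definition m_bot :: "nat \<Rightarrow> (nat \<Rightarrow> 'a na_alg) \<Rightarrow> (nat \<Rightarrow> 'a)" where
  "m_bot m As = restrict (\<lambda>i. na_bot (As i)) {..<m}"

definition m_top :: "nat \<Rightarrow> (nat \<Rightarrow> 'a na_alg) \<Rightarrow> (nat \<Rightarrow> 'a)" where
  "m_top m As = restrict (\<lambda>i. na_top (As i)) {..<m}"

definition m_leq :: "nat \<Rightarrow> (nat \<Rightarrow> 'a na_alg) \<Rightarrow> (nat \<Rightarrow> 'a) \<Rightarrow> (nat \<Rightarrow> 'a) \<Rightarrow> bool" where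
  "m_leq m As R R' \<longleftrightarrow> (\<forall>i<m. na_leq (As i) (R i) (R' i))"

definition m_basic :: "nat \<Rightarrow> (nat \<Rightarrow> 'a na_alg) \<Rightarrow> (nat \<Rightarrow> 'a) \<Rightarrow> bool" where
  "m_basic m As B \<longleftrightarrow> B \<in> m_rels m As \<and> (\<forall>i<m. B i \<in> na_atoms (As i))"

definition proj_step :: "nat \<Rightarrow> (nat \<Rightarrow> 'a na_alg) \<Rightarrow> (nat \<Rightarrow> nat \<Rightarrow> 'a \<Rightarrow> 'a)
    \<Rightarrow> (nat \<Rightarrow> 'a) \<Rightarrow> (nat \<Rightarrow> 'a) \<Rightarrow> bool" where
  "proj_step m As P R S \<longleftrightarrow>
     (\<exists>i<m. \<exists>j<m. i \<noteq> j \<and> S = R(j := na_meet (As j) (R j) (P i j (R i))))"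

definition proj_fixed :: "nat \<Rightarrow> (nat \<Rightarrow> 'a na_alg) \<Rightarrow> (nat \<Rightarrow> nat \<Rightarrow> 'a \<Rightarrow> 'a)
    \<Rightarrow> (nat \<Rightarrow> 'a) \<Rightarrow> bool" where
  "proj_fixed m As P R \<longleftrightarrow>
     (\<forall>i<m. \<forall>j<m. i \<noteq> j \<longrightarrow> na_meet (As j) (R j) (P i j (R i)) = R j)"

definition proj_closure :: "nat \<Rightarrow> (nat \<Rightarrow> 'a na_alg) \<Rightarrow> (nat \<Rightarrow> nat \<Rightarrow> 'a \<Rightarrow> 'a)
    \<Rightarrow> (nat \<Rightarrow> 'a) \<Rightarrow> (nat \<Rightarrow> 'a) \<Rightarrow> bool" where
  "proj_closure m As P R S \<longleftrightarrow> (proj_step m As P)\<^sup>*\<^sup>* R S \<and> proj_fixed m As P S"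

definition sequential_formalism :: "nat \<Rightarrow> (nat \<Rightarrow> 'a na_alg) \<Rightarrow> (nat \<Rightarrow> nat \<Rightarrow> 'a \<Rightarrow> 'a)
    \<Rightarrow> 'u set \<Rightarrow> ((nat \<Rightarrow> 'a) \<Rightarrow> ('u \<times> 'u) set) \<Rightarrow> bool" where
  "sequential_formalism m As P U \<phi> \<longleftrightarrow>
     multi_algebra m As P \<and> U \<noteq> {} \<and>
     (\<forall>R\<in>m_rels m As. \<phi> R \<subseteq> U \<times> U) \<and>
     (\<forall>R\<in>m_rels m As. \<forall>S. proj_closure m As P R S \<longrightarrow> \<phi> S = \<phi> R) \<and>
     (\<forall>R\<in>m_rels m As. \<phi> (m_conv m As R) = (\<phi> R)\<inverse>) \<and>
     \<phi> (m_bot m As) = {} \<and>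
     (\<forall>R\<in>m_rels m As. \<forall>R'\<in>m_rels m As.
        \<phi> (m_comp m As R R') \<supseteq> (\<phi> R O \<phi> R') \<inter> \<phi> (m_top m As) \<and>
        \<phi> (m_meet m As R R') = \<phi> R \<inter> \<phi> R') \<and>
     (\<forall>R\<in>m_rels m As. \<phi> R = (\<Union>B\<in>{B. m_basic m As B \<and> m_leq m As B R}. \<phi> B))"

definition loose_proj_atom :: "(nat \<Rightarrow> 'a na_alg) \<Rightarrow> (nat \<Rightarrow> 'a \<Rightarrow> ('u \<times> 'u) set)
    \<Rightarrow> nat \<Rightarrow> nat \<Rightarrow> 'a \<Rightarrow> 'a" where
  "loose_proj_atom As \<phi>s i j b =
     na_Join (As j) {b' \<in> na_atoms (As j). \<phi>s i b \<inter> \<phi>s j b' \<noteq> {}}"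

definition loose_proj :: "(nat \<Rightarrow> 'a na_alg) \<Rightarrow> (nat \<Rightarrow> 'a \<Rightarrow> ('u \<times> 'u) set)
    \<Rightarrow> nat \<Rightarrow> nat \<Rightarrow> 'a \<Rightarrow> 'a" where
  "loose_proj As \<phi>s i j r =
     na_Join (As j) (loose_proj_atom As \<phi>s i j ` {b \<in> na_atoms (As i). na_leq (As i) b r})"

definition loose_phi :: "nat \<Rightarrow> (nat \<Rightarrow> 'a \<Rightarrow> ('u \<times> 'u) set) \<Rightarrow> (nat \<Rightarrow> 'a) \<Rightarrow> ('u \<times> 'u) set" where
  "loose_phi m \<phi>s R = (\<Inter>i\<in>{..<m}. \<phi>s i (R i))"

end

theory Submission
  imports Defs
begin

(* The loose integration interprets a tuple as the intersection of its components, so every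
   clause of a sequential formalism except invariance under projection closure is inherited
   componentwise.  Invariance rests on soundness of the projections: a pair in phi_i r and in
   phi_j q lies in phi_i b and phi_j c for atoms b below r and c below q, and then c lies
   below the projection of r, so replacing R_j by R_j meet proj(R_i) does not change the
   intersection.  That the projections preserve union and converse is checked atom by atom,
   a finite Boolean algebra being atomic. *)

locale finite_boolean_alg =
  fixes A :: "'a na_alg"
  assumes finite_carrier: "finite (na_carrier A)"
    and boolean: "boolean_alg A"
begin

abbreviation "C \<equiv> na_carrier A"
abbreviation join (infixl "\<squnion>" 65) where "x \<squnion> y \<equiv> na_join A x y"
abbreviation meet (infixl "\<sqinter>" 70) where "x \<sqinter> y \<equiv> na_meet A x y"
abbreviation neg ("\<sim>_" [81] 80) where "\<sim>x \<equiv> na_neg A x"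
abbreviation bot_elem ("\<bottom>") where "\<bottom> \<equiv> na_bot A"
abbreviation top_elem ("\<top>") where "\<top> \<equiv> na_top A"
abbreviation leq (infix "\<sqsubseteq>" 50) where "x \<sqsubseteq> y \<equiv> na_leq A x y"
abbreviation "atoms \<equiv> na_atoms A"

lemma bot_closed [simp]: "\<bottom> \<in> C"
  and top_closed [simp]: "\<top> \<in> C"
  and join_closed [simp]: "x \<in> C \<Longrightarrow> y \<in> C \<Longrightarrow> x \<squnion> y \<in> C"
  and neg_closed [simp]: "x \<in> C \<Longrightarrow> \<sim>x \<in> C"
  using boolean unfolding boolean_alg_def by auto

lemma meet_closed [simp]: "x \<in> C \<Longrightarrow> y \<in> C \<Longrightarrow> x \<sqinter> y \<in> C"
  unfolding na_meet_def by simp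

lemma boolean_axioms:
  assumes "x \<in> C" "y \<in> C" "z \<in> C"
  shows "x \<squnion> y = y \<squnion> x" "x \<sqinter> y = y \<sqinter> x"
    "x \<squnion> y \<squnion> z = x \<squnion> (y \<squnion> z)" "x \<sqinter> y \<sqinter> z = x \<sqinter> (y \<sqinter> z)"
    "x \<squnion> (x \<sqinter> y) = x" "x \<sqinter> (x \<squnion> y) = x"
    "x \<sqinter> (y \<squnion> z) = x \<sqinter> y \<squnion> x \<sqinter> z"
    "x \<squnion> \<sim>x = \<top>" "x \<sqinter> \<sim>x = \<bottom>" "x \<squnion> \<bottom> = x" "x \<sqinter> \<top> = x"
  using boolean assms unfolding boolean_alg_def by blast+

lemmas join_comm = boolean_axioms(1)[OF _ _ bot_closed]
  and meet_comm = boolean_axioms(2)[OF _ _ bot_closed]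
  and join_assoc = boolean_axioms(3)
  and meet_assoc = boolean_axioms(4)
  and join_meet_absorb = boolean_axioms(5)[OF _ _ bot_closed]
  and meet_join_absorb = boolean_axioms(6)[OF _ _ bot_closed]
  and meet_join_distrib = boolean_axioms(7)
  and join_neg = boolean_axioms(8)[OF _ bot_closed bot_closed]
  and meet_neg = boolean_axioms(9)[OF _ bot_closed bot_closed]
  and join_bot = boolean_axioms(10)[OF _ bot_closed bot_closed]
  and meet_top = boolean_axioms(11)[OF _ bot_closed bot_closed]

lemma join_idem: "x \<in> C \<Longrightarrow> x \<squnion> x = x"
  by (metis join_meet_absorb meet_join_absorb join_closed)

lemma leq_refl: "x \<in> C \<Longrightarrow> x \<sqsubseteq> x"
  by (simp add: na_leq_def join_idem)

lemma leq_trans: "x \<in> C \<Longrightarrow> y \<in> C \<Longrightarrow> z \<in> C \<Longrightarrow> x \<sqsubseteq> y \<Longrightarrow> y \<sqsubseteq> z \<Longrightarrow> x \<sqsubseteq> z"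
  unfolding na_leq_def by (metis join_assoc)

lemma leq_antisym: "x \<in> C \<Longrightarrow> y \<in> C \<Longrightarrow> x \<sqsubseteq> y \<Longrightarrow> y \<sqsubseteq> x \<Longrightarrow> x = y"
  unfolding na_leq_def by (metis join_comm)

lemma leq_join1: "x \<in> C \<Longrightarrow> y \<in> C \<Longrightarrow> x \<sqsubseteq> x \<squnion> y"
  unfolding na_leq_def by (metis join_assoc join_idem)

lemma leq_join2: "x \<in> C \<Longrightarrow> y \<in> C \<Longrightarrow> y \<sqsubseteq> x \<squnion> y"
  by (metis join_comm leq_join1)

lemma join_least: "x \<in> C \<Longrightarrow> y \<in> C \<Longrightarrow> z \<in> C \<Longrightarrow> x \<sqsubseteq> z \<Longrightarrow> y \<sqsubseteq> z \<Longrightarrow> x \<squnion> y \<sqsubseteq> z"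
  unfolding na_leq_def by (metis join_assoc)

lemma bot_leq: "x \<in> C \<Longrightarrow> \<bottom> \<sqsubseteq> x"
  unfolding na_leq_def by (metis join_comm join_bot bot_closed)

lemma leq_bot_iff: "x \<in> C \<Longrightarrow> x \<sqsubseteq> \<bottom> \<longleftrightarrow> x = \<bottom>"
  by (metis bot_closed bot_leq leq_antisym leq_refl)

lemma leq_iff_meet: "x \<in> C \<Longrightarrow> y \<in> C \<Longrightarrow> x \<sqsubseteq> y \<longleftrightarrow> x \<sqinter> y = x"
  unfolding na_leq_def by (metis join_meet_absorb meet_join_absorb join_comm meet_comm)

lemma meet_leq1: "x \<in> C \<Longrightarrow> y \<in> C \<Longrightarrow> x \<sqinter> y \<sqsubseteq> x"
  unfolding na_leq_def by (metis join_meet_absorb join_comm meet_closed)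

lemma meet_leq2: "x \<in> C \<Longrightarrow> y \<in> C \<Longrightarrow> x \<sqinter> y \<sqsubseteq> y"
  by (metis meet_comm meet_leq1)

lemma meet_greatest: "x \<in> C \<Longrightarrow> y \<in> C \<Longrightarrow> z \<in> C \<Longrightarrow> z \<sqsubseteq> x \<Longrightarrow> z \<sqsubseteq> y \<Longrightarrow> z \<sqsubseteq> x \<sqinter> y"
  by (metis leq_iff_meet meet_assoc meet_closed)

lemma meet_neg_bot_leq:
  assumes "x \<in> C" "y \<in> C" "x \<sqinter> \<sim>y = \<bottom>"
  shows "x \<sqsubseteq> y"
proof -
  have "x = x \<sqinter> (y \<squnion> \<sim>y)" using assms by (simp add: join_neg meet_top)
  also have "\<dots> = x \<sqinter> y \<squnion> x \<sqinter> \<sim>y" using assms by (simp add: meet_join_distrib)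
  also have "\<dots> = x \<sqinter> y" using assms by (simp add: join_bot)
  finally show ?thesis using assms by (simp add: leq_iff_meet)
qed

lemma atomD:
  assumes "a \<in> atoms"
  shows "a \<in> C" "a \<noteq> \<bottom>" "\<And>y. y \<in> C \<Longrightarrow> y \<sqsubseteq> a \<Longrightarrow> y = \<bottom> \<or> y = a"
  using assms unfolding na_atoms_def by auto

lemma atom_leq_atom_iff: "a \<in> atoms \<Longrightarrow> c \<in> atoms \<Longrightarrow> c \<sqsubseteq> a \<longleftrightarrow> c = a"
  by (metis atomD leq_refl)

lemma atom_leq_or_disjoint:
  assumes "a \<in> atoms" "y \<in> C"
  shows "a \<sqsubseteq> y \<or> a \<sqinter> y = \<bottom>"
  using atomD(3)[OF assms(1), of "a \<sqinter> y"] atomD(1)[OF assms(1)] assms(2)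
  by (metis leq_iff_meet meet_closed meet_leq1)

lemma atom_not_leq_bot: "a \<in> atoms \<Longrightarrow> \<not> a \<sqsubseteq> \<bottom>"
  using atomD leq_bot_iff by blast

lemma exists_atom_below:
  assumes "x \<in> C" "x \<noteq> \<bottom>"
  shows "\<exists>a\<in>atoms. a \<sqsubseteq> x"
proof -
  let ?P = "\<lambda>y. y \<in> C \<and> y \<noteq> \<bottom> \<and> y \<sqsubseteq> x"
  let ?down = "\<lambda>y. {z \<in> C. z \<sqsubseteq> y}"
  obtain y where y: "?P y" and y_min: "\<And>w. ?P w \<Longrightarrow> card (?down y) \<le> card (?down w)"
    using ex_has_least_nat[of ?P x "\<lambda>y. card (?down y)"] assms leq_refl by blast
  have "y \<in> atoms"
    unfolding na_atoms_def
  proof (intro CollectI conjI ballI impI)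
    fix w assume w: "w \<in> C" "w \<sqsubseteq> y"
    show "w = \<bottom> \<or> w = y"
    proof (rule ccontr)
      assume "\<not> (w = \<bottom> \<or> w = y)"
      then have "?P w" and "?down w \<subset> ?down y"
        using w y assms leq_trans leq_antisym leq_refl by blast+
      then have "card (?down w) < card (?down y)"
        using finite_carrier by (simp add: psubset_card_mono)
      with y_min[OF \<open>?P w\<close>] show False by simp
    qed
  qed (use y in auto)
  with y show ?thesis by blast
qed

lemma leq_by_atoms:
  assumes "x \<in> C" "y \<in> C" "\<And>a. a \<in> atoms \<Longrightarrow> a \<sqsubseteq> x \<Longrightarrow> a \<sqsubseteq> y"
  shows "x \<sqsubseteq> y"
proof (rule meet_neg_bot_leq[OF assms(1,2)], rule ccontr)
  assume "x \<sqinter> \<sim>y \<noteq> \<bottom>"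
  then obtain a where a: "a \<in> atoms" "a \<sqsubseteq> x \<sqinter> \<sim>y"
    using exists_atom_below[of "x \<sqinter> \<sim>y"] assms(1,2) by auto
  have aC: "a \<in> C" using a atomD by blast
  have "a \<sqsubseteq> y" using a assms leq_trans[OF aC _ _ a(2) meet_leq1] by simp
  moreover have "a \<sqsubseteq> \<sim>y" using a assms leq_trans[OF aC _ _ a(2) meet_leq2] by simp
  ultimately have "a \<sqsubseteq> y \<sqinter> \<sim>y" using meet_greatest[OF assms(2) _ aC] assms by simp
  then have "a \<sqsubseteq> \<bottom>" using meet_neg[OF assms(2)] by simp
  then show False using a atom_not_leq_bot by blast
qed

lemma eq_by_atoms:
  assumes "x \<in> C" "y \<in> C" "\<And>a. a \<in> atoms \<Longrightarrow> a \<sqsubseteq> x \<longleftrightarrow> a \<sqsubseteq> y"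
  shows "x = y"
  using leq_by_atoms[OF assms(1,2)] leq_by_atoms[OF assms(2,1)] assms leq_antisym by blast

lemma atom_leq_join_iff:
  assumes "a \<in> atoms" "x \<in> C" "y \<in> C"
  shows "a \<sqsubseteq> x \<squnion> y \<longleftrightarrow> a \<sqsubseteq> x \<or> a \<sqsubseteq> y"
proof
  have aC: "a \<in> C" using assms atomD by blast
  assume a_leq: "a \<sqsubseteq> x \<squnion> y"
  show "a \<sqsubseteq> x \<or> a \<sqsubseteq> y"
  proof (rule ccontr)
    assume "\<not> (a \<sqsubseteq> x \<or> a \<sqsubseteq> y)"
    then have "a \<sqinter> x = \<bottom>" "a \<sqinter> y = \<bottom>" using atom_leq_or_disjoint assms by blast+
    moreover have "a = a \<sqinter> (x \<squnion> y)" using a_leq aC assms leq_iff_meet by simp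
    ultimately have "a = \<bottom>" using meet_join_distrib[OF aC assms(2,3)] join_bot by simp
    then show False using assms atomD by blast
  qed
next
  assume "a \<sqsubseteq> x \<or> a \<sqsubseteq> y"
  moreover have "x \<sqsubseteq> x \<squnion> y" "y \<sqsubseteq> x \<squnion> y"
    using assms leq_join1 leq_join2 by auto
  ultimately show "a \<sqsubseteq> x \<squnion> y"
    using assms atomD(1) leq_trans[of a _ "x \<squnion> y"] by auto
qed

definition is_lub :: "'a set \<Rightarrow> 'a \<Rightarrow> bool" where
  "is_lub S x \<longleftrightarrow> x \<in> C \<and> (\<forall>s\<in>S. s \<sqsubseteq> x) \<and> (\<forall>y\<in>C. (\<forall>s\<in>S. s \<sqsubseteq> y) \<longrightarrow> x \<sqsubseteq> y)"

lemma is_lub_unique: "is_lub S x \<Longrightarrow> is_lub S y \<Longrightarrow> x = y"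
  unfolding is_lub_def using leq_antisym by blast

lemma is_lub_empty: "is_lub {} \<bottom>"
  unfolding is_lub_def using bot_leq by simp

lemma is_lub_insert:
  assumes "s \<in> C" "S \<subseteq> C" "is_lub S x"
  shows "is_lub (insert s S) (s \<squnion> x)"
proof -
  have x: "x \<in> C" "\<forall>t\<in>S. t \<sqsubseteq> x" "\<forall>y\<in>C. (\<forall>t\<in>S. t \<sqsubseteq> y) \<longrightarrow> x \<sqsubseteq> y"
    using assms(3) unfolding is_lub_def by auto
  have "t \<sqsubseteq> s \<squnion> x" if "t \<in> S" for t
    using leq_trans[of t x "s \<squnion> x"] leq_join2[OF assms(1) x(1)] x that assms by auto
  moreover have "s \<squnion> x \<sqsubseteq> y" if "y \<in> C" "\<forall>t\<in>insert s S. t \<sqsubseteq> y" for y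
    using join_least[OF assms(1) x(1)] x(3) that by auto
  ultimately show ?thesis
    unfolding is_lub_def using leq_join1[OF assms(1) x(1)] assms(1) x(1) by auto
qed

lemma Join_is_lub:
  assumes "S \<subseteq> C"
  shows "is_lub S (na_Join A S)"
proof -
  have "finite S" using assms finite_carrier finite_subset by blast
  then have "\<exists>x. is_lub S x" using assms
    by (induction S rule: finite_induct) (auto intro: is_lub_empty is_lub_insert)
  then have "\<exists>!x. is_lub S x" using is_lub_unique by blast
  then show ?thesis unfolding na_Join_def is_lub_def[symmetric] by (rule theI')
qed

lemma Join_closed: "S \<subseteq> C \<Longrightarrow> na_Join A S \<in> C"
  using Join_is_lub unfolding is_lub_def by blast

lemma Join_empty: "na_Join A {} = \<bottom>"
  using Join_is_lub[of "{}"] is_lub_empty is_lub_unique by blast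

lemma Join_insert: "s \<in> C \<Longrightarrow> S \<subseteq> C \<Longrightarrow> na_Join A (insert s S) = s \<squnion> na_Join A S"
  using Join_is_lub[of "insert s S"] is_lub_insert[OF _ _ Join_is_lub] is_lub_unique by blast

lemma atom_leq_Join_iff:
  assumes "a \<in> atoms" "S \<subseteq> C"
  shows "a \<sqsubseteq> na_Join A S \<longleftrightarrow> (\<exists>s\<in>S. a \<sqsubseteq> s)"
proof -
  have "finite S" using assms finite_carrier finite_subset by blast
  then show ?thesis using assms(2)
  proof (induction S rule: finite_induct)
    case empty
    then show ?case using Join_empty atom_not_leq_bot[OF assms(1)] by simp
  next
    case (insert s S)
    then show ?case using Join_insert atom_leq_join_iff[OF assms(1)] Join_closed by simp
  qed
qed

lemma Join_atoms_below:
  assumes "x \<in> C"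
  shows "na_Join A {a \<in> atoms. a \<sqsubseteq> x} = x"
proof -
  have below: "{a \<in> atoms. a \<sqsubseteq> x} \<subseteq> C" using atomD(1) by blast
  show ?thesis
    by (rule eq_by_atoms[OF Join_closed[OF below] assms])
      (use atom_leq_Join_iff[OF _ below] atom_leq_atom_iff in auto)
qed

end

locale finite_na_alg =
  fixes A :: "'a na_alg"
  assumes finite_na_algebra: "finite_na_algebra A"

sublocale finite_na_alg \<subseteq> finite_boolean_alg
  using finite_na_algebra by unfold_locales (simp_all add: finite_na_algebra_def)

context finite_na_alg
begin

abbreviation conv ("_\<^sup>\<smile>" [1000] 1000) where "x\<^sup>\<smile> \<equiv> na_conv A x"

lemma conv_closed [simp]: "x \<in> C \<Longrightarrow> x\<^sup>\<smile> \<in> C"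
  and conv_conv [simp]: "x \<in> C \<Longrightarrow> x\<^sup>\<smile>\<^sup>\<smile> = x"
  and conv_join: "x \<in> C \<Longrightarrow> y \<in> C \<Longrightarrow> (x \<squnion> y)\<^sup>\<smile> = x\<^sup>\<smile> \<squnion> y\<^sup>\<smile>"
  using finite_na_algebra unfolding finite_na_algebra_def by auto

lemma conv_mono: "x \<in> C \<Longrightarrow> y \<in> C \<Longrightarrow> x \<sqsubseteq> y \<Longrightarrow> x\<^sup>\<smile> \<sqsubseteq> y\<^sup>\<smile>"
  unfolding na_leq_def by (metis conv_join)

lemma conv_leq_iff: "x \<in> C \<Longrightarrow> y \<in> C \<Longrightarrow> x\<^sup>\<smile> \<sqsubseteq> y \<longleftrightarrow> x \<sqsubseteq> y\<^sup>\<smile>"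
  by (metis conv_mono conv_conv conv_closed)

lemma conv_bot: "\<bottom>\<^sup>\<smile> = \<bottom>"
  using conv_leq_iff[of \<bottom> \<bottom>] bot_leq leq_bot_iff by simp

lemma conv_atom:
  assumes "a \<in> atoms"
  shows "a\<^sup>\<smile> \<in> atoms"
  unfolding na_atoms_def
proof (intro CollectI conjI ballI impI)
  show "a\<^sup>\<smile> \<in> C" using atomD(1)[OF assms] by simp
  show "a\<^sup>\<smile> \<noteq> \<bottom>" using atomD(1,2)[OF assms] conv_bot by (metis conv_conv)
  fix y assume "y \<in> C" "y \<sqsubseteq> a\<^sup>\<smile>"
  then have "y\<^sup>\<smile> = \<bottom> \<or> y\<^sup>\<smile> = a"
    using atomD[OF assms] conv_leq_iff by simp
  then show "y = \<bottom> \<or> y = a\<^sup>\<smile>"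
    using \<open>y \<in> C\<close> conv_bot by (metis conv_conv)
qed

lemma ex_atom_below_conv_iff:
  assumes "r \<in> C"
  shows "(\<exists>b\<in>atoms. b \<sqsubseteq> r\<^sup>\<smile> \<and> Q b) \<longleftrightarrow> (\<exists>b\<in>atoms. b \<sqsubseteq> r \<and> Q (b\<^sup>\<smile>))"
proof
  assume "\<exists>b\<in>atoms. b \<sqsubseteq> r\<^sup>\<smile> \<and> Q b"
  then obtain b where "b \<in> atoms" "b \<sqsubseteq> r\<^sup>\<smile>" "Q b" by blast
  then show "\<exists>b\<in>atoms. b \<sqsubseteq> r \<and> Q (b\<^sup>\<smile>)"
    using conv_atom conv_leq_iff[of b r] assms atomD(1) by (intro bexI[of _ "b\<^sup>\<smile>"]) auto
next
  assume "\<exists>b\<in>atoms. b \<sqsubseteq> r \<and> Q (b\<^sup>\<smile>)"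
  then obtain b where "b \<in> atoms" "b \<sqsubseteq> r" "Q (b\<^sup>\<smile>)" by blast
  then show "\<exists>b\<in>atoms. b \<sqsubseteq> r\<^sup>\<smile> \<and> Q b"
    using conv_atom conv_mono[of b r] assms atomD(1) by (intro bexI[of _ "b\<^sup>\<smile>"]) auto
qed

end

locale sym_qual =
  fixes A :: "'a na_alg" and U :: "'u set" and \<phi> :: "'a \<Rightarrow> ('u \<times> 'u) set"
  assumes sym_qual_formalism: "sym_qual_formalism A U \<phi>"

sublocale sym_qual \<subseteq> finite_na_alg
  using sym_qual_formalism by unfold_locales (simp add: sym_qual_formalism_def)

context sym_qual
begin

lemma U_nonempty: "U \<noteq> {}"
  and phi_subset: "r \<in> C \<Longrightarrow> \<phi> r \<subseteq> U \<times> U"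
  and phi_bot: "\<phi> \<bottom> = {}"
  and phi_conv: "r \<in> C \<Longrightarrow> \<phi> (r\<^sup>\<smile>) = (\<phi> r)\<inverse>"
  and phi_meet: "r \<in> C \<Longrightarrow> r' \<in> C \<Longrightarrow> \<phi> (r \<sqinter> r') = \<phi> r \<inter> \<phi> r'"
  and phi_join: "r \<in> C \<Longrightarrow> r' \<in> C \<Longrightarrow> \<phi> (r \<squnion> r') = \<phi> r \<union> \<phi> r'"
  and phi_comp: "r \<in> C \<Longrightarrow> r' \<in> C \<Longrightarrow> (\<phi> r O \<phi> r') \<inter> \<phi> \<top> \<subseteq> \<phi> (na_comp A r r')"
  using sym_qual_formalism unfolding sym_qual_formalism_def by simp_all

lemma phi_mono:
  assumes "x \<in> C" "y \<in> C" "x \<sqsubseteq> y"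
  shows "\<phi> x \<subseteq> \<phi> y"
proof -
  have "\<phi> y = \<phi> x \<union> \<phi> y"
    using phi_join[OF assms(1,2)] assms(3) unfolding na_leq_def by simp
  then show ?thesis by blast
qed

lemma phi_Join: "S \<subseteq> C \<Longrightarrow> \<phi> (na_Join A S) = (\<Union>s\<in>S. \<phi> s)"
proof (induction S rule: infinite_finite_induct)
  case (infinite S)
  then show ?case using finite_carrier finite_subset by blast
next
  case empty
  then show ?case by (simp add: Join_empty phi_bot)
next
  case (insert s S)
  then show ?case by (simp add: Join_insert phi_join Join_closed)
qed

lemma phi_eq_Union_atoms: "x \<in> C \<Longrightarrow> \<phi> x = (\<Union>a\<in>{a \<in> atoms. a \<sqsubseteq> x}. \<phi> a)"
  using phi_Join[of "{a \<in> atoms. a \<sqsubseteq> x}"] Join_atoms_below atomD(1) by auto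

end

lemma loose_proj_closed:
  assumes "finite_boolean_alg (As j)"
  shows "loose_proj As \<phi>s i j r \<in> na_carrier (As j)"
proof -
  interpret J: finite_boolean_alg "As j" by fact
  have "loose_proj_atom As \<phi>s i j b \<in> na_carrier (As j)" for b
    unfolding loose_proj_atom_def by (rule J.Join_closed) (use J.atomD in blast)
  then show ?thesis
    unfolding loose_proj_def by (intro J.Join_closed) blast
qed

lemma atom_leq_loose_proj_iff:
  assumes "finite_boolean_alg (As j)" and c: "c \<in> na_atoms (As j)"
  shows "na_leq (As j) c (loose_proj As \<phi>s i j r) \<longleftrightarrow>
    (\<exists>b\<in>na_atoms (As i). na_leq (As i) b r \<and> \<phi>s i b \<inter> \<phi>s j c \<noteq> {})"
proof -
  interpret J: finite_boolean_alg "As j" by fact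
  have atoms_meeting: "{c \<in> na_atoms (As j). \<phi>s i b \<inter> \<phi>s j c \<noteq> {}} \<subseteq> na_carrier (As j)" for b
    using J.atomD by blast
  have proj_atom: "na_leq (As j) c (loose_proj_atom As \<phi>s i j b) \<longleftrightarrow> \<phi>s i b \<inter> \<phi>s j c \<noteq> {}" for b
    unfolding loose_proj_atom_def J.atom_leq_Join_iff[OF c atoms_meeting] using J.atom_leq_atom_iff c by auto
  have "loose_proj_atom As \<phi>s i j ` {b \<in> na_atoms (As i). na_leq (As i) b r} \<subseteq> na_carrier (As j)"
    unfolding loose_proj_atom_def using J.Join_closed[OF atoms_meeting] by blast
  then show ?thesis
    unfolding loose_proj_def using J.atom_leq_Join_iff[OF c] proj_atom by auto
qed

lemma loose_proj_join:
  assumes "finite_boolean_alg (As i)" "finite_boolean_alg (As j)"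
    and "r \<in> na_carrier (As i)" "r' \<in> na_carrier (As i)"
  shows "loose_proj As \<phi>s i j (na_join (As i) r r') =
    na_join (As j) (loose_proj As \<phi>s i j r) (loose_proj As \<phi>s i j r')"
proof -
  interpret I: finite_boolean_alg "As i" by fact
  interpret J: finite_boolean_alg "As j" by fact
  note closed = loose_proj_closed[where As = As and j = j, OF assms(2)]
  show ?thesis
  proof (rule J.eq_by_atoms)
    fix c assume c: "c \<in> na_atoms (As j)"
    show "na_leq (As j) c (loose_proj As \<phi>s i j (na_join (As i) r r')) \<longleftrightarrow>
        na_leq (As j) c (na_join (As j) (loose_proj As \<phi>s i j r) (loose_proj As \<phi>s i j r'))"
      unfolding J.atom_leq_join_iff[OF c closed closed]
        atom_leq_loose_proj_iff[where As = As and j = j, OF assms(2) c]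
      using I.atom_leq_join_iff assms(3,4) by blast
  qed (simp_all add: closed)
qed

lemma loose_proj_conv:
  assumes si: "sym_qual (As i) U (\<phi>s i)" and sj: "sym_qual (As j) U (\<phi>s j)"
    and r: "r \<in> na_carrier (As i)"
  shows "loose_proj As \<phi>s i j (na_conv (As i) r) = na_conv (As j) (loose_proj As \<phi>s i j r)"
proof -
  interpret I: sym_qual "As i" U "\<phi>s i" by fact
  interpret J: sym_qual "As j" U "\<phi>s j" by fact
  note closed = loose_proj_closed[where As = As and j = j, OF J.finite_boolean_alg_axioms]
  note proj_iff = atom_leq_loose_proj_iff[where As = As and j = j and i = i and \<phi>s = \<phi>s,
      OF J.finite_boolean_alg_axioms]
  show ?thesis
  proof (rule J.eq_by_atoms)
    fix c assume c: "c \<in> na_atoms (As j)"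
    have cC: "c \<in> na_carrier (As j)" using c J.atomD by blast
    have conv_swap: "\<phi>s i (na_conv (As i) b) \<inter> \<phi>s j c \<noteq> {} \<longleftrightarrow>
        \<phi>s i b \<inter> \<phi>s j (na_conv (As j) c) \<noteq> {}" if "b \<in> na_atoms (As i)" for b
      using I.phi_conv[OF I.atomD(1)[OF that]] J.phi_conv[OF cC] by auto
    have "na_leq (As j) c (loose_proj As \<phi>s i j (na_conv (As i) r)) \<longleftrightarrow>
        (\<exists>b\<in>na_atoms (As i). na_leq (As i) b r \<and> \<phi>s i b \<inter> \<phi>s j (na_conv (As j) c) \<noteq> {})"
      unfolding proj_iff[OF c] I.ex_atom_below_conv_iff[OF r] using conv_swap by auto
    also have "\<dots> \<longleftrightarrow> na_leq (As j) (na_conv (As j) c) (loose_proj As \<phi>s i j r)"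
      using proj_iff[OF J.conv_atom[OF c]] by simp
    also have "\<dots> \<longleftrightarrow> na_leq (As j) c (na_conv (As j) (loose_proj As \<phi>s i j r))"
      using J.conv_leq_iff[OF cC closed] .
    finally show "na_leq (As j) c (loose_proj As \<phi>s i j (na_conv (As i) r)) \<longleftrightarrow>
        na_leq (As j) c (na_conv (As j) (loose_proj As \<phi>s i j r))" .
  qed (simp_all add: closed)
qed

lemma projection_op_loose_proj:
  assumes "sym_qual (As i) U (\<phi>s i)" "sym_qual (As j) U (\<phi>s j)"
  shows "projection_op (As i) (As j) (loose_proj As \<phi>s i j)"
proof -
  interpret I: sym_qual "As i" U "\<phi>s i" by fact
  interpret J: sym_qual "As j" U "\<phi>s j" by fact
  show ?thesis
    unfolding projection_op_def
    using loose_proj_closed[where As = As and j = j, OF J.finite_boolean_alg_axioms] loose_proj_conv[OF assms]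
      loose_proj_join[OF I.finite_boolean_alg_axioms J.finite_boolean_alg_axioms]
    by blast
qed

lemma loose_proj_sound:
  assumes si: "sym_qual (As i) U (\<phi>s i)" and sj: "sym_qual (As j) U (\<phi>s j)"
    and "r \<in> na_carrier (As i)" "q \<in> na_carrier (As j)"
  shows "\<phi>s i r \<inter> \<phi>s j q \<subseteq> \<phi>s j (loose_proj As \<phi>s i j r)"
proof
  interpret I: sym_qual "As i" U "\<phi>s i" by fact
  interpret J: sym_qual "As j" U "\<phi>s j" by fact
  fix p assume "p \<in> \<phi>s i r \<inter> \<phi>s j q"
  then obtain b c where b: "b \<in> na_atoms (As i)" "na_leq (As i) b r" "p \<in> \<phi>s i b"
    and c: "c \<in> na_atoms (As j)" "p \<in> \<phi>s j c"
    using I.phi_eq_Union_atoms J.phi_eq_Union_atoms assms(3,4) by blast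
  then have "na_leq (As j) c (loose_proj As \<phi>s i j r)"
    using atom_leq_loose_proj_iff[where As = As and j = j, OF J.finite_boolean_alg_axioms c(1)] by blast
  then show "p \<in> \<phi>s j (loose_proj As \<phi>s i j r)"
    using J.phi_mono[OF J.atomD(1)[OF c(1)] loose_proj_closed[where As = As and j = j, OF J.finite_boolean_alg_axioms]] c(2)
    by blast
qed

locale loose_integration =
  fixes m :: nat and As :: "nat \<Rightarrow> 'a na_alg" and U :: "'u set"
    and \<phi>s :: "nat \<Rightarrow> 'a \<Rightarrow> ('u \<times> 'u) set"
  assumes components: "\<And>i. i < m \<Longrightarrow> sym_qual (As i) U (\<phi>s i)"
begin

abbreviation "P \<equiv> loose_proj As \<phi>s"
abbreviation "\<phi> \<equiv> loose_phi m \<phi>s"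
abbreviation "Rels \<equiv> m_rels m As"

lemma rel_closed: "R \<in> Rels \<Longrightarrow> i < m \<Longrightarrow> R i \<in> na_carrier (As i)"
  unfolding m_rels_def by auto

lemma mem_loose_phi: "p \<in> \<phi> R \<longleftrightarrow> (\<forall>i<m. p \<in> \<phi>s i (R i))"
  unfolding loose_phi_def by auto

lemma multi_algebra: "multi_algebra m As P"
  unfolding multi_algebra_def
proof (intro conjI allI impI)
  fix i assume "i < m"
  then show "finite_na_algebra (As i)"
    using components unfolding sym_qual_def sym_qual_formalism_def by blast
next
  fix i j assume "i < m" "j < m"
  then show "projection_op (As i) (As j) (P i j)"
    using projection_op_loose_proj[OF components[of i] components[of j]] by blast
qed

lemma loose_phi_subset:
  assumes "0 < m" "R \<in> Rels"
  shows "\<phi> R \<subseteq> U \<times> U"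
proof -
  have "\<phi> R \<subseteq> \<phi>s 0 (R 0)" using assms(1) mem_loose_phi by blast
  also have "\<dots> \<subseteq> U \<times> U"
    using sym_qual.phi_subset[OF components[OF assms(1)] rel_closed[OF assms(2,1)]] .
  finally show ?thesis .
qed

lemma proj_step_preserves:
  assumes R: "R \<in> Rels" and "proj_step m As P R S"
  shows "S \<in> Rels \<and> \<phi> S = \<phi> R"
proof -
  obtain i j where ij: "i < m" "j < m" "i \<noteq> j"
    and S: "S = R(j := na_meet (As j) (R j) (P i j (R i)))"
    using assms(2) unfolding proj_step_def by blast
  interpret J: sym_qual "As j" U "\<phi>s j" by (rule components[OF ij(2)])
  have proj_closed: "P i j (R i) \<in> na_carrier (As j)"
    by (rule loose_proj_closed[where As = As and j = j, OF J.finite_boolean_alg_axioms])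
  have "S \<in> Rels"
    using R proj_closed rel_closed[OF R ij(2)] ij(2)
    unfolding S m_rels_def by (auto simp: PiE_iff extensional_def)
  moreover have "\<phi>s j (S j) = \<phi>s j (R j) \<inter> \<phi>s j (P i j (R i))"
    using J.phi_meet[OF rel_closed[OF R ij(2)] proj_closed] S by simp
  moreover have "\<phi>s i (R i) \<inter> \<phi>s j (R j) \<subseteq> \<phi>s j (P i j (R i))"
    using loose_proj_sound[OF components[OF ij(1)] components[OF ij(2)]] rel_closed[OF R] ij
    by blast
  ultimately show ?thesis
    using ij S unfolding loose_phi_def by (auto split: if_splits)
qed

lemma loose_phi_proj_closure:
  assumes "R \<in> Rels" "proj_closure m As P R S"
  shows "\<phi> S = \<phi> R"
proof -
  have "(proj_step m As P)\<^sup>*\<^sup>* R S" using assms(2) unfolding proj_closure_def by blast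
  then have "S \<in> Rels \<and> \<phi> S = \<phi> R"
    by (induction rule: rtranclp_induct) (use assms(1) proj_step_preserves in auto)
  then show ?thesis ..
qed

lemma loose_phi_conv: "R \<in> Rels \<Longrightarrow> \<phi> (m_conv m As R) = (\<phi> R)\<inverse>"
  unfolding loose_phi_def m_conv_def using sym_qual.phi_conv[OF components rel_closed] by auto

lemma loose_phi_bot: "0 < m \<Longrightarrow> \<phi> (m_bot m As) = {}"
  using mem_loose_phi sym_qual.phi_bot[OF components] unfolding m_bot_def by fastforce

lemma loose_phi_meet: "R \<in> Rels \<Longrightarrow> R' \<in> Rels \<Longrightarrow> \<phi> (m_meet m As R R') = \<phi> R \<inter> \<phi> R'"
  unfolding loose_phi_def m_meet_def using sym_qual.phi_meet[OF components rel_closed rel_closed] by auto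

lemma loose_phi_comp:
  assumes "R \<in> Rels" "R' \<in> Rels"
  shows "(\<phi> R O \<phi> R') \<inter> \<phi> (m_top m As) \<subseteq> \<phi> (m_comp m As R R')"
  using sym_qual.phi_comp[OF components rel_closed[OF assms(1)] rel_closed[OF assms(2)]]
  unfolding loose_phi_def m_top_def m_comp_def by fastforce

lemma loose_phi_eq_Union_basic:
  assumes R: "R \<in> Rels"
  shows "\<phi> R = (\<Union>B\<in>{B. m_basic m As B \<and> m_leq m As B R}. \<phi> B)"
proof (intro equalityI subsetI)
  fix p assume "p \<in> \<phi> R"
  then have "\<forall>i\<in>{..<m}. \<exists>b. b \<in> na_atoms (As i) \<and> na_leq (As i) b (R i) \<and> p \<in> \<phi>s i b"
    using sym_qual.phi_eq_Union_atoms[OF components rel_closed[OF R]] mem_loose_phi by blast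
  then obtain f where f: "\<forall>i\<in>{..<m}. f i \<in> na_atoms (As i) \<and> na_leq (As i) (f i) (R i) \<and> p \<in> \<phi>s i (f i)"
    by metis
  have "m_basic m As (restrict f {..<m})" "m_leq m As (restrict f {..<m}) R" "p \<in> \<phi> (restrict f {..<m})"
    using f unfolding m_basic_def m_rels_def m_leq_def mem_loose_phi na_atoms_def by auto
  then show "p \<in> (\<Union>B\<in>{B. m_basic m As B \<and> m_leq m As B R}. \<phi> B)" by blast
next
  fix p assume "p \<in> (\<Union>B\<in>{B. m_basic m As B \<and> m_leq m As B R}. \<phi> B)"
  then obtain B where B: "B \<in> Rels" "m_leq m As B R" "p \<in> \<phi> B"
    unfolding m_basic_def by blast
  then show "p \<in> \<phi> R"
    using sym_qual.phi_mono[OF components rel_closed[OF B(1)] rel_closed[OF R]]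
    unfolding mem_loose_phi m_leq_def by blast
qed

end

theorem proposition4p17:
  fixes m :: nat
    and As :: "nat \<Rightarrow> 'a na_alg"
    and U :: "'u set"
    and \<phi>s :: "nat \<Rightarrow> 'a \<Rightarrow> ('u \<times> 'u) set"
  assumes "m \<ge> 1"
    and "\<forall>i<m. sym_qual_formalism (As i) U (\<phi>s i)"
  shows "sequential_formalism m As (loose_proj As \<phi>s) U (loose_phi m \<phi>s)"
proof -
  interpret loose_integration m As U \<phi>s
    using assms(2) by unfold_locales (simp add: sym_qual_def)
  have "0 < m" using assms(1) by simp
  then show ?thesis
    unfolding sequential_formalism_def
    using multi_algebra sym_qual.U_nonempty[OF components] loose_phi_subset loose_phi_proj_closure
      loose_phi_conv loose_phi_bot loose_phi_meet loose_phi_comp loose_phi_eq_Union_basic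
    by (intro conjI ballI allI impI) simp_all
qed

end
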